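(* Let $\{a_n\}_{n\ge1}$, $\{b_n\}_{n\ge1}$ and $\{\tilde a_n\}_{n\ge1}$ be three non-negative real sequences such that $\sum_{n=1}^\infty a_n=\infty$, $\sum_{n=1}^\infty a_n b_n^p<\infty$, $\lim_{n\to\infty} a_n/\tilde a_n=1$, and $|b_{n+1}-b_n|\le C\,\tilde a_n\, b_n^{p-\epsilon}$ for all $n$, for some positive constants $C$, $p$ and some $\epsilon\in[0,p]$. Then $\lim_{n\to\infty} b_n=0$.
   Context: Here $b_n^{0}$ is interpreted as $1$ (relevant when $\epsilon=p$). *)

theory Defs
  imports Complex_Main
begin

text \<open>Real power x^e for x \<ge> 0 with the paper's convention x^0 = 1 (also for x = 0);
  note that Isabelle's powr has 0 powr 0 = 0.\<close>
definition rpow :: "real \<Rightarrow> real \<Rightarrow> real" where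
  "rpow x e = (if e = 0 then 1 else x powr e)"

end

theory Submission
  imports Defs
begin

text \<open>Since \<open>\<Sum> a\<^sub>n = \<infinity>\<close> but \<open>\<Sum> a\<^sub>n b\<^sub>n\<^sup>p < \<infinity>\<close>, the sequence \<open>b\<close> keeps returning below
  any level \<open>d > 0\<close>. While \<open>b\<^sub>j \<ge> d\<close>, the increment bound gives
  \<open>|b\<^sub>j\<^sub>+\<^sub>1 - b\<^sub>j| \<le> K a\<^sub>j b\<^sub>j\<^sup>p\<close> with \<open>K = 2C/d\<^sup>\<epsilon>\<close> (using \<open>\<tilde>a\<^sub>j \<le> 2a\<^sub>j\<close> eventually), so
  along any stretch above \<open>d\<close> the total drop of \<open>b\<close> is bounded by a tail of the convergent
  series \<open>K \<Sum> a\<^sub>j b\<^sub>j\<^sup>p\<close>. Once that tail is below \<open>d\<close>, a late value \<open>b\<^sub>n \<ge> 2d\<close> could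
  never descend below \<open>d\<close> again, a contradiction.\<close>

lemma rpow_diff_le_div_powr:
  fixes x d p e :: real
  assumes "0 < d" "d \<le> x" "0 \<le> e" "e \<le> p" "0 < p"
  shows "rpow x (p - e) \<le> rpow x p / d powr e"
proof (cases "e = p")
  case True
  have "d powr p \<le> x powr p" using assms by (intro powr_mono2) auto
  then show ?thesis using True assms by (simp add: rpow_def)
next
  case False
  then have "rpow x (p - e) = x powr p / x powr e" by (simp add: rpow_def powr_diff)
  also have "\<dots> \<le> x powr p / d powr e"
    using assms by (intro divide_left_mono powr_mono2) auto
  finally show ?thesis using assms by (simp add: rpow_def)
qed

lemma increment_le_mult_if_above:
  fixes x y C t p \<epsilon> a d :: real
  assumes "\<bar>y - x\<bar> \<le> C * t * rpow x (p - \<epsilon>)" "0 \<le> t" "t \<le> 2 * a" "0 < C"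
    and "0 < d" "d \<le> x" "0 \<le> \<epsilon>" "\<epsilon> \<le> p" "0 < p"
  shows "\<bar>y - x\<bar> \<le> 2 * C / d powr \<epsilon> * (a * rpow x p)"
proof -
  have "rpow x (p - \<epsilon>) \<le> rpow x p / d powr \<epsilon>"
    using assms by (intro rpow_diff_le_div_powr) auto
  then have "C * t * rpow x (p - \<epsilon>) \<le> C * (2 * a) * (rpow x p / d powr \<epsilon>)"
    using assms by (intro mult_mono mult_left_mono) (auto simp: rpow_def)
  with assms(1) show ?thesis by (simp add: field_simps)
qed

lemma eventually_le_2_mult_if_ratio_tendsto_1:
  fixes a t :: "nat \<Rightarrow> real"
  assumes "(\<lambda>n. a n / t n) \<longlonglongrightarrow> 1" "\<forall>\<^sub>F n in sequentially. t n \<ge> 0"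
  shows "\<forall>\<^sub>F n in sequentially. t n \<le> 2 * a n"
proof -
  have "\<forall>\<^sub>F n in sequentially. a n / t n > 1/2"
    using assms(1) by (rule order_tendstoD) simp
  with assms(2) show ?thesis
  proof eventually_elim
    case (elim n)
    then have "t n > 0" by (cases "t n = 0") auto
    with elim show ?case by (simp add: field_simps)
  qed
qed

lemma frequently_less_if_weighted_summable:
  fixes a b :: "nat \<Rightarrow> real"
  assumes "\<not> summable a" "summable (\<lambda>n. a n * b n powr p)"
    and "\<forall>\<^sub>F n in sequentially. a n \<ge> 0" "0 < d" "0 < p"
  shows "\<exists>k\<ge>n. b k < d"
proof (rule ccontr)
  assume "\<not> ?thesis"
  then have above: "\<forall>\<^sub>F k in sequentially. d \<le> b k"
    by (auto simp: eventually_sequentially not_less)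
  have "\<forall>\<^sub>F k in sequentially. norm (a k) \<le> a k * b k powr p / d powr p"
    using above assms(3)
  proof eventually_elim
    case (elim k)
    have "d powr p \<le> b k powr p" using elim assms(4,5) by (intro powr_mono2) auto
    then have "a k * d powr p \<le> a k * b k powr p" using elim by (intro mult_left_mono) auto
    with elim assms(4,5) show ?case by (simp add: field_simps)
  qed
  then have "summable a"
    using summable_divide[OF assms(2), of "d powr p"] by (rule summable_comparison_test_ev)
  with assms(1) show False by contradiction
qed

lemma less_add_if_reaches_below:
  fixes b c :: "nat \<Rightarrow> real"
  assumes drop: "\<And>j. n \<le> j \<Longrightarrow> d \<le> b j \<Longrightarrow> b j - b (Suc j) \<le> c j"
    and tail: "\<And>k. sum c {n..<k} \<le> \<eta>"
    and reach: "\<exists>k\<ge>n. b k < d"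
  shows "b n < d + \<eta>"
proof -
  define k where "k = (LEAST k. n \<le> k \<and> b k < d)"
  have k: "n \<le> k" "b k < d" using LeastI_ex[OF reach] by (auto simp: k_def)
  have "b n - b k = - (\<Sum>j=n..<k. b (Suc j) - b j)"
    using sum_Suc_diff'[OF k(1), of b] by simp
  also have "\<dots> = (\<Sum>j=n..<k. b j - b (Suc j))"
    by (simp add: sum_negf[symmetric])
  also have "\<dots> \<le> sum c {n..<k}"
  proof (rule sum_mono)
    fix j assume j: "j \<in> {n..<k}"
    then have "d \<le> b j"
      using not_less_Least[of j "\<lambda>k. n \<le> k \<and> b k < d"] by (auto simp: k_def)
    with j show "b j - b (Suc j) \<le> c j" using drop by auto
  qed
  also have "\<dots> \<le> \<eta>" by (rule tail)
  finally show ?thesis using k by linarith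
qed

lemma tendsto_zero_if_frequently_small_and_drops_summable:
  fixes b g :: "nat \<Rightarrow> real"
  assumes nonneg: "\<forall>\<^sub>F n in sequentially. b n \<ge> 0"
    and summable: "summable g"
    and small: "\<And>d n. 0 < d \<Longrightarrow> \<exists>k\<ge>n. b k < d"
    and drops: "\<And>d. 0 < d \<Longrightarrow>
      \<exists>K>0. \<forall>\<^sub>F j in sequentially. d \<le> b j \<longrightarrow> b j - b (Suc j) \<le> K * g j"
  shows "b \<longlonglongrightarrow> 0"
proof (rule LIMSEQ_I)
  fix e :: real assume "0 < e"
  define d where "d = e / 2"
  have d: "0 < d" using \<open>0 < e\<close> by (simp add: d_def)
  obtain K where K: "0 < K" "\<forall>\<^sub>F j in sequentially. d \<le> b j \<longrightarrow> b j - b (Suc j) \<le> K * g j"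
    using drops[OF d] by blast
  obtain N1 where N1: "\<And>j. N1 \<le> j \<Longrightarrow> d \<le> b j \<Longrightarrow> b j - b (Suc j) \<le> K * g j"
    using K(2) by (auto simp: eventually_sequentially)
  obtain N2 where N2: "\<And>m k. N2 \<le> m \<Longrightarrow> norm (sum g {m..<k}) < d / K"
    using summable d K(1) unfolding summable_Cauchy by (meson divide_pos_pos)
  obtain N3 where N3: "\<And>n. N3 \<le> n \<Longrightarrow> b n \<ge> 0"
    using nonneg by (auto simp: eventually_sequentially)
  show "\<exists>N. \<forall>n\<ge>N. norm (b n - 0) < e"
  proof (intro exI allI impI)
    fix n assume n: "max N1 (max N2 N3) \<le> n"
    have "sum (\<lambda>j. K * g j) {n..<k} \<le> d" for k
    proof -
      have "K * sum g {n..<k} \<le> K * \<bar>sum g {n..<k}\<bar>" using K(1) by simp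
      also have "\<dots> < d" using N2[of n k] n K(1) by (simp add: field_simps)
      finally show ?thesis by (simp add: sum_distrib_left)
    qed
    then have "b n < d + d"
      using less_add_if_reaches_below[of n d b "\<lambda>j. K * g j" d] N1 n small[OF d] by auto
    with N3[of n] n show "norm (b n - 0) < e" by (simp add: d_def)
  qed
qed

theorem lemma3p1:
  fixes a b ta :: "nat \<Rightarrow> real" and C p \<epsilon> :: real
  assumes a_nonneg: "\<forall>n\<ge>1. a n \<ge> 0"
      and b_nonneg: "\<forall>n\<ge>1. b n \<ge> 0"
      and ta_nonneg: "\<forall>n\<ge>1. ta n \<ge> 0"
      and a_div: "\<not> summable (\<lambda>n. a (Suc n))"
      and ab_sum: "summable (\<lambda>n. a (Suc n) * rpow (b (Suc n)) p)"
      and ratio: "(\<lambda>n. a n / ta n) \<longlonglongrightarrow> 1"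
      and C_pos: "C > 0" and p_pos: "p > 0"
      and eps: "0 \<le> \<epsilon>" "\<epsilon> \<le> p"
      and incr: "\<forall>n\<ge>1. \<bar>b (Suc n) - b n\<bar> \<le> C * ta n * rpow (b n) (p - \<epsilon>)"
  shows "b \<longlonglongrightarrow> 0"
proof (rule tendsto_zero_if_frequently_small_and_drops_summable)
  have rpow_p: "rpow x p = x powr p" for x using p_pos by (simp add: rpow_def)
  have late: "\<forall>\<^sub>F n in sequentially. 1 \<le> n" by (rule eventually_ge_at_top)
  show "\<forall>\<^sub>F n in sequentially. b n \<ge> 0" using late by eventually_elim (use b_nonneg in auto)
  show "summable (\<lambda>n. a n * rpow (b n) p)" using ab_sum by (subst summable_Suc_iff[symmetric])
  show "\<exists>k\<ge>n. b k < d" if "0 < d" for d n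
    using frequently_less_if_weighted_summable[of a b p d n] a_div ab_sum late a_nonneg that p_pos
    by (simp add: summable_Suc_iff[of a] summable_Suc_iff[of "\<lambda>n. a n * b n powr p"] rpow_p
        eventually_mono)
  show "\<exists>K>0. \<forall>\<^sub>F j in sequentially. d \<le> b j \<longrightarrow> b j - b (Suc j) \<le> K * (a j * rpow (b j) p)"
    if d: "0 < d" for d
  proof (intro exI conjI)
    show "0 < 2 * C / d powr \<epsilon>" using C_pos d by simp
    have "\<forall>\<^sub>F j in sequentially. ta j \<ge> 0" using late by eventually_elim (use ta_nonneg in auto)
    then have "\<forall>\<^sub>F j in sequentially. ta j \<le> 2 * a j"
      by (rule eventually_le_2_mult_if_ratio_tendsto_1[OF ratio])
    with late show "\<forall>\<^sub>F j in sequentially. d \<le> b j \<longrightarrow>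
        b j - b (Suc j) \<le> 2 * C / d powr \<epsilon> * (a j * rpow (b j) p)"
    proof eventually_elim
      case (elim j)
      then show ?case
        using increment_le_mult_if_above[of "b (Suc j)" "b j" C "ta j" p \<epsilon> "a j" d] incr ta_nonneg
          C_pos d eps p_pos by fastforce
    qed
  qed
qed

end
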